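(* Consider Method 2.3 (a modified level method, described in the context) and suppose it does not terminate and the numbers $\varepsilon_k$ satisfy $\varepsilon_k>0$ for all $k\in K$ and $\varepsilon_k\to0$. Then the sequences $\{z_k\},\{\sigma_k\}$ are defined for all $k\in K$ and $\lim_{k\to\infty}f(z_k)=f^*$, $\lim_{k\to\infty}\sigma_k=f^*$.
   Context: Setting: $D\subset\mathbb{R}^n$ convex, closed and bounded (nonempty); $f$ convex on $\mathbb{R}^n$; $f^*=\min_Df$; $X^*=\{x\in D:f(x)=f^*\}$, $x^*\in X^*$ fixed; $K=\{0,1,\dots\}$; $\operatorname{epi}(f,D)=\{(x,\gamma):x\in D,\gamma\ge f(x)\}$; $\partial f(x)$ is the subdifferential. Method 2.3: choose closed convex $M_0\subset\mathbb{R}^{n+1}$ with $\operatorname{epi}(f,D)\subset M_0$, numbers $\varepsilon_0\ge0$, $\alpha_0\le f^*\le\beta_{-1}$, and $\bar\lambda\in(0,1)$; set $\delta_0=+\infty$, $i=k=0$. Step 1: let $(y_i,\gamma_i)$ solve $\min\{\gamma:(x,\gamma)\in M_i,\ x\in D,\ \gamma\ge\alpha_i\}$; if $f(y_i)=\gamma_i$ stop. Step 2: choose $\lambda_i\in(0,\bar\lambda]$; set $\beta_i=\min\{\beta_{i-1},\delta_i\}$, $l_i=(1-\lambda_i)\gamma_i+\lambda_i\beta_i$, and $U_i=\{x\in D:\exists\gamma\le l_i \text{ with }(x,\gamma)\in M_i\}$. Step 3: choose $x_i\in U_i$. Step 4: if $f(x_i)-\gamma_i>\varepsilon_k$ set $Q_i=M_i$;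 otherwise set $i_k=i$, $z_k=x_{i_k}$, $\sigma_k=\gamma_{i_k}$, choose closed convex $Q_i\subset\mathbb{R}^{n+1}$ with $(x^*,f^* )\in Q_i$, choose $\varepsilon_{k+1}\ge0$, $k\leftarrow k+1$. Step 5: $M_{i+1}=Q_i\cap\{(x,\gamma):f(x_i)+\langle a_i,x-x_i\rangle\le\gamma\}$ with $a_i\in\partial f(x_i)$. Step 6: $\alpha_{i+1}=\gamma_i$, $\delta_{i+1}=f(x_i)$; $i\leftarrow i+1$; go to Step 1. *)

theory Defs
  imports "HOL-Analysis.Analysis"
begin

definition subdifferential :: "('a::real_inner \<Rightarrow> real) \<Rightarrow> 'a \<Rightarrow> 'a set" where
  "subdifferential f x = {a. \<forall>y. f x + inner a (y - x) \<le> f y}"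

definition epi_on :: "('a \<Rightarrow> real) \<Rightarrow> 'a set \<Rightarrow> ('a \<times> real) set" where
  "epi_on f D = {(x, g). x \<in> D \<and> f x \<le> g}"

end

theory Submission
  imports Defs
begin

text \<open>
  The pair \<open>(x*, f*)\<close> survives every cut and every model update, so the lower bounds
  \<open>\<gamma>\<^sub>i\<close> increase and stay below \<open>f*\<close>; hence they converge. Suppose that from some index
  on only null steps occur. Then \<open>\<epsilon>\<close> is frozen at some \<open>e > 0\<close>, the models only shrink, and
  for \<open>i < j\<close> the point \<open>x\<^sub>j\<close> lies above the cut taken at \<open>x\<^sub>i\<close> and below the level
  \<open>l\<^sub>j \<le> (1 - \<lambda>\<^sub>j) \<gamma>\<^sub>j + \<lambda>\<^sub>j f(x\<^sub>i)\<close>. Once \<open>\<gamma>\<close> varies by less than \<open>e/2\<close>, this gives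
  \<open>(1 - lbar) e/2 \<le> L |x\<^sub>j - x\<^sub>i|\<close>, where \<open>L\<close> bounds the subgradients on \<open>D\<close>: the
  points \<open>x\<^sub>i\<close> are uniformly separated, which is impossible in the compact set \<open>D\<close>. So
  serious steps occur infinitely often, every counter value \<open>k\<close> is reached, and at the
  serious step \<open>\<sigma>\<^sub>k = \<gamma>\<^sub>i \<le> f* \<le> f(z\<^sub>k) \<le> \<sigma>\<^sub>k + \<epsilon>\<^sub>k\<close>.
\<close>

lemma subdifferential_norm_le:
  assumes "a \<in> subdifferential f x"
  shows "norm a \<le> f (x + sgn a) - f x"
proof -
  have "f x + inner a ((x + sgn a) - x) \<le> f (x + sgn a)"
    using assms unfolding subdifferential_def by blast
  moreover have "inner a ((x + sgn a) - x) = norm a"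
    by (cases "a = 0") (simp_all add: sgn_div_norm power2_norm_eq_inner[symmetric] power2_eq_square)
  ultimately show ?thesis by linarith
qed

lemma subdifferential_bounded_on_bounded:
  fixes f :: "'a::euclidean_space \<Rightarrow> real"
  assumes "convex_on UNIV f" "bounded D"
  obtains L where "L > 0" "\<And>x a. x \<in> D \<Longrightarrow> a \<in> subdifferential f x \<Longrightarrow> norm a \<le> L"
proof -
  obtain R where R: "\<And>x. x \<in> D \<Longrightarrow> norm x \<le> R"
    using assms(2) unfolding bounded_iff by blast
  have "continuous_on (cball 0 (R + 1)) f"
    using convex_on_continuous[OF open_UNIV assms(1)] by (rule continuous_on_subset) simp
  then obtain B where B: "\<And>y. norm y \<le> R + 1 \<Longrightarrow> \<bar>f y\<bar> \<le> B"
    using continuous_on_compact_bound[OF compact_cball] by (metis mem_cball_0 real_norm_def)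
  have "norm a \<le> 2 * \<bar>B\<bar> + 1" if "x \<in> D" "a \<in> subdifferential f x" for x a
  proof -
    have "norm (sgn a) \<le> 1" by (simp add: norm_sgn)
    then have "norm (x + sgn a) \<le> R + 1"
      using norm_triangle_ineq[of x "sgn a"] R[OF \<open>x \<in> D\<close>] by linarith
    then have "\<bar>f (x + sgn a)\<bar> \<le> B" "\<bar>f x\<bar> \<le> B"
      using B R[OF \<open>x \<in> D\<close>] by simp_all
    with subdifferential_norm_le[OF that(2)] show ?thesis by linarith
  qed
  then show ?thesis using that[of "2 * \<bar>B\<bar> + 1"] by simp
qed

lemma compact_seq_close_pair:
  fixes x :: "nat \<Rightarrow> 'a::metric_space"
  assumes "compact D" "\<And>i. x i \<in> D" "c > 0"
  obtains i j where "N \<le> i" "i < j" "dist (x i) (x j) < c"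
proof -
  obtain l and r :: "nat \<Rightarrow> nat" where r: "strict_mono r" "(x \<circ> r) \<longlonglongrightarrow> l"
    using compact_imp_seq_compact[OF assms(1)] assms(2) seq_compactE by metis
  then obtain K where K: "\<And>m n. K \<le> m \<Longrightarrow> K \<le> n \<Longrightarrow> dist (x (r m)) (x (r n)) < c"
    using metric_CauchyD[OF LIMSEQ_imp_Cauchy \<open>c > 0\<close>] by (metis comp_apply)
  define m where "m = max K N"
  have "N \<le> r m" using seq_suble[OF r(1), of m] by (simp add: m_def)
  moreover have "r m < r (Suc m)" using r(1) by (simp add: strict_mono_Suc_iff)
  moreover have "dist (x (r m)) (x (r (Suc m))) < c" using K by (simp add: m_def)
  ultimately show ?thesis using that by blast
qed

text \<open>Read \<open>fu\<close> as \<open>f u\<close>: the point \<open>v\<close> lies above the cut at \<open>u\<close> and below the level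
  \<open>(1 - t) \<gamma> + t fu\<close>.\<close>

lemma level_cut_dist:
  fixes a u v :: "'a::real_inner"
  assumes "norm a \<le> L" "0 \<le> t" "t \<le> lbar" "lbar \<le> 1" "0 \<le> e" "e \<le> fu - \<gamma>"
    and cut: "fu + inner a (v - u) \<le> (1 - t) * \<gamma> + t * fu"
  shows "(1 - lbar) * e \<le> L * dist u v"
proof -
  have "(1 - lbar) * e \<le> (1 - t) * (fu - \<gamma>)"
    using assms by (intro mult_mono) auto
  also have "\<dots> \<le> - inner a (v - u)"
    using cut by (simp add: algebra_simps)
  also have "\<dots> \<le> norm a * norm (v - u)"
    using Cauchy_Schwarz_ineq2[of a "v - u"] by linarith
  also have "\<dots> \<le> L * dist u v"
    using assms(1) by (simp add: dist_norm norm_minus_commute mult_right_mono)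
  finally show ?thesis .
qed

lemma counter_constant:
  fixes c :: "nat \<Rightarrow> nat"
  assumes "\<And>m. \<not> S m \<Longrightarrow> c (Suc m) = c m" "\<And>m. i \<le> m \<Longrightarrow> m < j \<Longrightarrow> \<not> S m" "i \<le> j"
  shows "c j = c i"
  using assms(3,2) by (induction j rule: dec_induct) (auto simp: assms(1))

lemma counter_attains:
  fixes c :: "nat \<Rightarrow> nat"
  assumes "c 0 = 0"
    and "\<And>m. S m \<Longrightarrow> c (Suc m) = Suc (c m)" "\<And>m. \<not> S m \<Longrightarrow> c (Suc m) = c m"
    and "\<And>N. \<exists>m\<ge>N. S m"
  shows "\<exists>i. c i = k \<and> S i"
proof -
  have next_S: "\<exists>j\<ge>i. c j = c i \<and> S j" for i
  proof -
    define j where "j = (LEAST j. i \<le> j \<and> S j)"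
    have j: "i \<le> j" "S j"
      using LeastI_ex[of "\<lambda>j. i \<le> j \<and> S j"] assms(4) unfolding j_def by blast+
    have "\<not> S m" if "i \<le> m" "m < j" for m
      using not_less_Least[of m "\<lambda>j. i \<le> j \<and> S j"] that unfolding j_def by blast
    then show ?thesis using j counter_constant[of S c i j] assms(3) by blast
  qed
  show ?thesis
  proof (induction k)
    case 0
    then show ?case using next_S[of 0] assms(1) by auto
  next
    case (Suc k)
    then obtain i where "c i = k" "S i" by blast
    then show ?case using next_S[of "Suc i"] assms(2) by auto
  qed
qed

text \<open>Method 2.3, reduced to the data the convergence proof uses: the solution \<open>y\<^sub>i\<close> of the
  auxiliary problem enters only through its value \<open>\<gamma>\<^sub>i\<close>.\<close>

locale level_method =
  fixes D :: "'a::euclidean_space set" and f :: "'a \<Rightarrow> real" and xs :: 'a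
    and M Q :: "nat \<Rightarrow> ('a \<times> real) set"
    and x a :: "nat \<Rightarrow> 'a"
    and \<gamma> \<alpha> \<beta> lam l \<epsilon> :: "nat \<Rightarrow> real" and lbar :: real
    and kc :: "nat \<Rightarrow> nat" and z :: "nat \<Rightarrow> 'a" and \<sigma> :: "nat \<Rightarrow> real"
  assumes compact_D: "compact D"
    and convex_f: "convex_on UNIV f"
    and xs_in_D: "xs \<in> D" and xs_min: "\<And>u. u \<in> D \<Longrightarrow> f xs \<le> f u"
    and epi_M0: "epi_on f D \<subseteq> M 0"
    and \<epsilon>_pos: "\<And>k. \<epsilon> k > 0" and \<epsilon>_lim: "\<epsilon> \<longlonglongrightarrow> 0"
    and \<alpha>0: "\<alpha> 0 \<le> f xs"
    and lbar: "lbar < 1"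
    and kc0: "kc 0 = 0"
    and \<alpha>_le_\<gamma>: "\<And>i. \<alpha> i \<le> \<gamma> i"
    and \<gamma>_min: "\<And>i u g. (u, g) \<in> M i \<Longrightarrow> u \<in> D \<Longrightarrow> \<alpha> i \<le> g \<Longrightarrow> \<gamma> i \<le> g"
    and lam: "\<And>i. 0 < lam i \<and> lam i \<le> lbar"
    and \<beta>_Suc: "\<And>i. \<beta> (Suc i) = min (\<beta> i) (f (x i))"
    and level: "\<And>i. l i = (1 - lam i) * \<gamma> i + lam i * \<beta> i"
    and x_in_D: "\<And>i. x i \<in> D"
    and x_below_level: "\<And>i. \<exists>g. g \<le> l i \<and> (x i, g) \<in> M i"
    and null_step: "\<And>i. \<epsilon> (kc i) < f (x i) - \<gamma> i \<Longrightarrow> Q i = M i \<and> kc (Suc i) = kc i"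
    and serious_step: "\<And>i. f (x i) - \<gamma> i \<le> \<epsilon> (kc i) \<Longrightarrow>
           z (kc i) = x i \<and> \<sigma> (kc i) = \<gamma> i \<and> (xs, f xs) \<in> Q i \<and> kc (Suc i) = Suc (kc i)"
    and subgrad: "\<And>i. a i \<in> subdifferential f (x i)"
    and M_Suc: "\<And>i. M (Suc i) = Q i \<inter> {(u, g). f (x i) + inner (a i) (u - x i) \<le> g}"
    and \<alpha>_Suc: "\<And>i. \<alpha> (Suc i) = \<gamma> i"
begin

definition serious :: "nat \<Rightarrow> bool" where
  "serious i \<longleftrightarrow> f (x i) - \<gamma> i \<le> \<epsilon> (kc i)"

lemma optimum_in_model: "(xs, f xs) \<in> M i \<and> \<alpha> i \<le> f xs"
proof (induction i)
  case 0
  then show ?case using epi_M0 xs_in_D \<alpha>0 unfolding epi_on_def by auto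
next
  case (Suc i)
  have "(xs, f xs) \<in> Q i"
    using Suc null_step serious_step by (cases "serious i") (auto simp: serious_def not_le)
  moreover have "f (x i) + inner (a i) (xs - x i) \<le> f xs"
    using subgrad unfolding subdifferential_def by blast
  ultimately show ?case
    using Suc \<gamma>_min xs_in_D by (auto simp: M_Suc \<alpha>_Suc)
qed

lemma \<gamma>_le_opt: "\<gamma> i \<le> f xs"
  using optimum_in_model \<gamma>_min xs_in_D by blast

lemma \<gamma>_convergent: "convergent \<gamma>"
proof -
  have "incseq \<gamma>"
    by (rule incseq_SucI) (metis \<alpha>_Suc \<alpha>_le_\<gamma>)
  then show ?thesis
    using incseq_convergent[of \<gamma> "f xs"] \<gamma>_le_opt convergentI by metis
qed

lemma \<beta>_le_value: "i < j \<Longrightarrow> \<beta> j \<le> f (x i)"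
  by (induction j) (auto simp: \<beta>_Suc less_Suc_eq)

lemma model_antimono:
  assumes "\<And>m. i \<le> m \<Longrightarrow> m < j \<Longrightarrow> \<not> serious m" "i \<le> j"
  shows "M j \<subseteq> M i"
  using assms(2,1)
proof (induction j rule: dec_induct)
  case (step j)
  then have "Q j = M j" using null_step by (simp add: serious_def not_le)
  then show ?case using step M_Suc by auto
qed simp

text \<open>The cut taken at \<open>x\<^sub>i\<close> stays in the model while only null steps follow it.\<close>

lemma level_cut:
  assumes "i < j" "\<And>m. i < m \<Longrightarrow> m < j \<Longrightarrow> \<not> serious m"
  shows "f (x i) + inner (a i) (x j - x i) \<le> (1 - lam j) * \<gamma> j + lam j * f (x i)"
proof -
  obtain g where g: "g \<le> l j" "(x j, g) \<in> M j" using x_below_level by blast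
  have "M j \<subseteq> M (Suc i)"
    using assms by (intro model_antimono) auto
  with g have "f (x i) + inner (a i) (x j - x i) \<le> g"
    by (auto simp: M_Suc)
  also have "g \<le> (1 - lam j) * \<gamma> j + lam j * \<beta> j"
    using g level by simp
  also have "\<dots> \<le> (1 - lam j) * \<gamma> j + lam j * f (x i)"
    using \<beta>_le_value[OF assms(1)] lam[of j] by (simp add: mult_left_mono)
  finally show ?thesis .
qed

lemma serious_steps_unbounded: "\<exists>i\<ge>N. serious i"
proof (rule ccontr)
  assume "\<not> ?thesis"
  then have null: "\<And>i. N \<le> i \<Longrightarrow> \<not> serious i" by blast
  define e where "e = \<epsilon> (kc N)"
  have "e > 0" using \<epsilon>_pos by (simp add: e_def)
  have kc_const: "kc i = kc N" if "N \<le> i" for i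
  proof (rule counter_constant[of serious kc N i, OF _ _ that])
    show "kc (Suc m) = kc m" if "\<not> serious m" for m
      using null_step that by (simp add: serious_def not_le)
  qed (use null in auto)
  have gap: "e < f (x i) - \<gamma> i" if "N \<le> i" for i
    using null[OF that] kc_const[OF that] by (simp add: serious_def e_def)
  obtain K where K: "\<And>i j. K \<le> i \<Longrightarrow> K \<le> j \<Longrightarrow> dist (\<gamma> i) (\<gamma> j) < e / 2"
    using metric_CauchyD[OF convergent_Cauchy[OF \<gamma>_convergent], of "e / 2"] \<open>e > 0\<close> by auto
  obtain L where L: "L > 0" "\<And>u b. u \<in> D \<Longrightarrow> b \<in> subdifferential f u \<Longrightarrow> norm b \<le> L"
    using subdifferential_bounded_on_bounded[OF convex_f compact_imp_bounded[OF compact_D]] by blast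
  have "(1 - lbar) * (e / 2) / L > 0" using lbar \<open>e > 0\<close> \<open>L > 0\<close> by simp
  then obtain i j where ij: "max N K \<le> i" "i < j" "dist (x i) (x j) < (1 - lbar) * (e / 2) / L"
    by (rule compact_seq_close_pair[OF compact_D x_in_D])
  have cut: "f (x i) + inner (a i) (x j - x i) \<le> (1 - lam j) * \<gamma> j + lam j * f (x i)"
    using ij(1,2) null by (intro level_cut) auto
  have "dist (\<gamma> i) (\<gamma> j) < e / 2"
    using K ij(1,2) by simp
  then have "\<gamma> j - \<gamma> i < e / 2"
    unfolding dist_real_def by arith
  then have "e / 2 \<le> f (x i) - \<gamma> j"
    using gap[of i] ij(1) by simp
  moreover have "norm (a i) \<le> L"
    using L(2) x_in_D subgrad by blast
  ultimately have "(1 - lbar) * (e / 2) \<le> L * dist (x i) (x j)"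
    by (intro level_cut_dist[OF _ _ _ _ _ _ cut]) (use lam[of j] lbar \<open>e > 0\<close> in auto)
  moreover have "L * dist (x i) (x j) < (1 - lbar) * (e / 2)"
    using ij(3) \<open>L > 0\<close> by (simp add: pos_less_divide_eq mult.commute)
  ultimately show False by linarith
qed

lemma serious_step_for_each_counter: "\<exists>i. kc i = k \<and> serious i"
proof (rule counter_attains[of kc serious])
  show "kc (Suc m) = Suc (kc m)" if "serious m" for m
    using serious_step[of m] that unfolding serious_def by blast
  show "kc (Suc m) = kc m" if "\<not> serious m" for m
    using null_step[of m] that unfolding serious_def by linarith
qed (use kc0 serious_steps_unbounded in auto)

lemma serious_values_bracket: "\<sigma> k \<le> f xs \<and> f xs \<le> f (z k) \<and> f (z k) \<le> \<sigma> k + \<epsilon> k"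
proof -
  obtain i where i: "kc i = k" "serious i"
    using serious_step_for_each_counter by blast
  then have "z k = x i" "\<sigma> k = \<gamma> i"
    using serious_step[of i] unfolding serious_def by auto
  then show ?thesis
    using i \<gamma>_le_opt[of i] xs_min[OF x_in_D[of i]] unfolding serious_def by simp
qed

lemma f_z_tendsto: "(\<lambda>k. f (z k)) \<longlonglongrightarrow> f xs"
proof -
  have bounds: "f xs \<le> f (z k) \<and> f (z k) \<le> f xs + \<epsilon> k" for k
    using serious_values_bracket[of k] by linarith
  have lim: "(\<lambda>k. f xs + \<epsilon> k) \<longlonglongrightarrow> f xs"
    using tendsto_add[OF tendsto_const \<epsilon>_lim] by simp
  show ?thesis
    by (rule tendsto_sandwich[OF always_eventually always_eventually tendsto_const lim])
      (use bounds in auto)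
qed

lemma \<sigma>_tendsto: "\<sigma> \<longlonglongrightarrow> f xs"
proof -
  have bounds: "f xs - \<epsilon> k \<le> \<sigma> k \<and> \<sigma> k \<le> f xs" for k
    using serious_values_bracket[of k] by linarith
  have lim: "(\<lambda>k. f xs - \<epsilon> k) \<longlonglongrightarrow> f xs"
    using tendsto_diff[OF tendsto_const \<epsilon>_lim] by simp
  show ?thesis
    by (rule tendsto_sandwich[OF always_eventually always_eventually lim tendsto_const])
      (use bounds in auto)
qed

end

theorem theorem2p3p3:
  fixes D :: "'a::euclidean_space set" and f :: "'a \<Rightarrow> real" and xs :: 'a
    and M Q :: "nat \<Rightarrow> ('a \<times> real) set"
    and y x a :: "nat \<Rightarrow> 'a"
    and \<gamma> \<alpha> \<beta> lam l \<epsilon> :: "nat \<Rightarrow> real"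
    and \<beta>m1 lbar :: real
    and kc :: "nat \<Rightarrow> nat"
    and ik :: "nat \<Rightarrow> nat" and z :: "nat \<Rightarrow> 'a" and \<sigma> :: "nat \<Rightarrow> real"
  assumes D: "convex D" "closed D" "bounded D" "D \<noteq> {}"
    and f_convex: "convex_on UNIV f"
    and xs_opt: "xs \<in> D" "\<forall>u\<in>D. f xs \<le> f u"
    \<comment> \<open>initialisation\<close>
    and M0: "closed (M 0)" "convex (M 0)" "epi_on f D \<subseteq> M 0"
    and eps: "\<forall>k. \<epsilon> k > 0" "\<epsilon> \<longlonglongrightarrow> 0"
    and alpha0: "\<alpha> 0 \<le> f xs" and betam1: "f xs \<le> \<beta>m1"
    and lambar: "0 < lbar" "lbar < 1"
    and kc0: "kc 0 = 0"
    \<comment> \<open>Step 1: (y i, \<gamma> i) solves the auxiliary problem; the method does not stop\<close>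
    and step1: "\<forall>i. (y i, \<gamma> i) \<in> M i \<and> y i \<in> D \<and> \<alpha> i \<le> \<gamma> i \<and>
                   (\<forall>u g. (u, g) \<in> M i \<and> u \<in> D \<and> \<alpha> i \<le> g \<longrightarrow> \<gamma> i \<le> g)"
    and no_stop: "\<forall>i. f (y i) \<noteq> \<gamma> i"
    \<comment> \<open>Step 2 (with \<delta>_0 = +\<infinity>, \<delta>_(i+1) = f(x_i))\<close>
    and lam: "\<forall>i. 0 < lam i \<and> lam i \<le> lbar"
    and beta0: "\<beta> 0 = \<beta>m1"
    and betaS: "\<forall>i. \<beta> (Suc i) = min (\<beta> i) (f (x i))"
    and level: "\<forall>i. l i = (1 - lam i) * \<gamma> i + lam i * \<beta> i"
    \<comment> \<open>Step 3: x i \<in> U i\<close>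
    and step3: "\<forall>i. x i \<in> D \<and> (\<exists>g. g \<le> l i \<and> (x i, g) \<in> M i)"
    \<comment> \<open>Step 4\<close>
    and step4_null: "\<forall>i. f (x i) - \<gamma> i > \<epsilon> (kc i) \<longrightarrow> Q i = M i \<and> kc (Suc i) = kc i"
    and step4_serious: "\<forall>i. \<not> (f (x i) - \<gamma> i > \<epsilon> (kc i)) \<longrightarrow>
           ik (kc i) = i \<and> z (kc i) = x i \<and> \<sigma> (kc i) = \<gamma> i \<and>
           closed (Q i) \<and> convex (Q i) \<and> (xs, f xs) \<in> Q i \<and> kc (Suc i) = Suc (kc i)"
    \<comment> \<open>Step 5\<close>
    and subgrad: "\<forall>i. a i \<in> subdifferential f (x i)"
    and step5: "\<forall>i. M (Suc i) = Q i \<inter> {(u, g). f (x i) + inner (a i) (u - x i) \<le> g}"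
    \<comment> \<open>Step 6\<close>
    and step6: "\<forall>i. \<alpha> (Suc i) = \<gamma> i"
  shows "(\<forall>k. \<exists>i. kc i = k \<and> \<not> (f (x i) - \<gamma> i > \<epsilon> k))
         \<and> (\<lambda>k. f (z k)) \<longlonglongrightarrow> f xs \<and> \<sigma> \<longlonglongrightarrow> f xs"
proof -
  interpret level_method D f xs M Q x a \<gamma> \<alpha> \<beta> lam l \<epsilon> lbar kc z \<sigma>
  proof
    show "compact D" using D(2,3) by (simp add: compact_eq_bounded_closed)
  qed (use f_convex xs_opt M0(3) eps alpha0 lambar(2) kc0 step1 lam betaS level step3 step4_null
        step4_serious subgrad step5 step6 in \<open>simp_all add: not_less\<close>)
  show ?thesis
    using serious_step_for_each_counter f_z_tendsto \<sigma>_tendsto by (fastforce simp: serious_def not_less)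
qed

end
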